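(* Write $V(b,\epsilon)=\sup_{\sigma,\sigma'\ge0}D_{b,\epsilon}(\sigma,\sigma')$. For $\theta\in\mathbb{R}^m$ let $\theta^+=\max(\theta,0)$ and $\theta^-=\max(-\theta,0)$ (entrywise). Then $$-V(b,\epsilon)=\inf_{\theta\in\mathbb{R}^m}\Big[-\eta\cdot\log g^{(\theta)}+\big(b^*-(b-\epsilon)\big)\cdot\theta^+ +\big(b+\epsilon-b^*\big)\cdot\theta^-\Big],$$ where all the coefficient vectors $b^*-(b-\epsilon)$ and $b+\epsilon-b^*$ are entrywise nonnegative. If $(\sigma,\sigma')$ attains $\sup D_{b,\epsilon}$, then $\theta^{bf}=\sigma'-\sigma$ attains the infimum on the right. Moreover, for every $\theta\in\mathbb{R}^m$ and $i\in[n]$, $A_i^\top\theta=T_\theta\widehat x_i$, so $g^{(\theta)}_i$ is the softmax of $T_\theta\widehat x_i$.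
   Context: Standard setup. Let $n\ge1$, $k\ge2$, $p\ge1$ be integers and $m=p+k$. There are $n$ data points $x_1,\dots,x_n$ and $p$ rules $h^{(1)},\dots,h^{(p)}$, each a map from $\{x_1,\dots,x_n\}$ to $\{1,\dots,k\}\cup\{?\}$, where "?" means abstain. Let $n_j\ge1$ be the number of indices $i$ with $h^{(j)}(x_i)\neq ?$. $\Delta_k$ denotes the probability simplex in $\mathbb{R}^k$; an element $z\in\Delta_k^n\subset\mathbb{R}^{nk}$ is written $z=(z_1,\dots,z_n)$ with $z_i=(z_{i1},\dots,z_{ik})\in\Delta_k$. For $j\le p$ let $h^{(j)}\in\{0,1\}^{nk}$ also denote the vector with $h^{(j)}_{i\ell}=1$ iff $h^{(j)}(x_i)=\ell$; for $\ell\le k$ let $\vec e^{\,n}_\ell\in\{0,1\}^{nk}$ have entries $(\vec e^{\,n}_\ell)_{i\ell'}=\mathbf 1(\ell'=\ell)$. The matrix $A\in\mathbb{R}^{m\times nk}$ has rows $a^{(j)}=h^{(j)}/n_j$ for $1\le j\le p$ and $a^{(p+\ell)}=\vec e^{\,n}_\ell/n$ for $1\le\ell\le k$. For $\theta\in\mathbb{R}^m$ put $a^{(\theta)}=A^\top\theta\in\mathbb{R}^{nk}$ (entries $a^{(\theta)}_{i\ell}$) and define $g^{(\theta)}\in\Delta_k^n$ by $g^{(\theta)}_{i\ell}=\exp(a^{(\theta)}_{i\ell})/\sum_{\ell'=1}^k\exp(a^{(\theta)}_{i\ell'})$; let $\mathcal G=\{g^{(\theta)}:\theta\in\mathbb{R}^m\}$.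 A fixed "true labeling" $\eta\in\Delta_k^n$ is given and $b^*:=A\eta\in\mathbb{R}^m$. Given $b\in\mathbb{R}^m$ and $\epsilon\in\mathbb{R}^m$ with $\epsilon\ge0$ and $b-\epsilon\le b^*\le b+\epsilon$ (entrywise), let $P=\{z\in\Delta_k^n:\ b-\epsilon\le Az\le b+\epsilon\}$ (entrywise). Logarithms act entrywise; $z\cdot\log g=\sum_{i,\ell}z_{i\ell}\log g_{i\ell}$ with conventions $0\log 0=0$, $\log 0=-\infty$. Dual function: for $\sigma,\sigma'\in\mathbb{R}^m_{\ge0}$, $D_{b,\epsilon}(\sigma,\sigma')=(\sigma'-\sigma)\cdot b-(\sigma'+\sigma)\cdot\epsilon-\sum_{i=1}^n\log\big(\sum_{\ell=1}^k\exp(a^{(\sigma'-\sigma)}_{i\ell})\big)$. For $i\in[n]$, $A_i\in\mathbb{R}^{m\times k}$ denotes the submatrix of $A$ formed by columns $k(i-1)+1,\dots,ki$; $\widehat x_i\in\mathbb{R}^{mk}$ is $A_i$ flattened in row-major order (its $((j-1)k+\ell)$-th entry is the $(j,\ell)$ entry of $A_i$); and $T_\theta=(\theta_1 I_k,\theta_2I_k,\dots,\theta_mI_k)\in\mathbb{R}^{k\times mk}$, with $I_k$ the $k\times k$ identity. *)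

theory Defs
  imports "HOL-Analysis.Analysis"
begin

(* Conventions (0-based indices):
   data points i < n, labels l < k, rules j < p, constraint rows j < m = p + k.
   A rule family is  h :: nat => nat => nat option,  h j i = None  means abstain,
   h j i = Some l  means rule j assigns label l to x_i.
   Vectors in R^{nk} are functions  nat => nat => real  (entry (i,l)),
   vectors in R^m are functions  nat => real  (entries j < m). *)

definition nj :: "nat \<Rightarrow> (nat \<Rightarrow> nat \<Rightarrow> nat option) \<Rightarrow> nat \<Rightarrow> nat" where
  "nj n h j = card {i. i < n \<and> h j i \<noteq> None}"

definition Amat :: "nat \<Rightarrow> nat \<Rightarrow> (nat \<Rightarrow> nat \<Rightarrow> nat option) \<Rightarrow> nat \<Rightarrow> nat \<Rightarrow> nat \<Rightarrow> real" where
  "Amat n p h j i l =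
     (if j < p then (if h j i = Some l then 1 / real (nj n h j) else 0)
      else (if l = j - p then 1 / real n else 0))"

definition a_theta :: "nat \<Rightarrow> nat \<Rightarrow> nat \<Rightarrow> (nat \<Rightarrow> nat \<Rightarrow> nat option) \<Rightarrow> (nat \<Rightarrow> real) \<Rightarrow> nat \<Rightarrow> nat \<Rightarrow> real" where
  "a_theta n k p h \<theta> i l = (\<Sum>j<p + k. \<theta> j * Amat n p h j i l)"

definition softmax :: "nat \<Rightarrow> (nat \<Rightarrow> real) \<Rightarrow> nat \<Rightarrow> real" where
  "softmax k v l = exp (v l) / (\<Sum>l'<k. exp (v l'))"

definition g_theta :: "nat \<Rightarrow> nat \<Rightarrow> nat \<Rightarrow> (nat \<Rightarrow> nat \<Rightarrow> nat option) \<Rightarrow> (nat \<Rightarrow> real) \<Rightarrow> nat \<Rightarrow> nat \<Rightarrow> real" where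
  "g_theta n k p h \<theta> i l =
     exp (a_theta n k p h \<theta> i l) / (\<Sum>l'<k. exp (a_theta n k p h \<theta> i l'))"

definition bstar :: "nat \<Rightarrow> nat \<Rightarrow> nat \<Rightarrow> (nat \<Rightarrow> nat \<Rightarrow> nat option) \<Rightarrow> (nat \<Rightarrow> nat \<Rightarrow> real) \<Rightarrow> nat \<Rightarrow> real" where
  "bstar n k p h \<eta> j = (\<Sum>i<n. \<Sum>l<k. Amat n p h j i l * \<eta> i l)"

definition Dual :: "nat \<Rightarrow> nat \<Rightarrow> nat \<Rightarrow> (nat \<Rightarrow> nat \<Rightarrow> nat option) \<Rightarrow> (nat \<Rightarrow> real) \<Rightarrow> (nat \<Rightarrow> real)
                     \<Rightarrow> (nat \<Rightarrow> real) \<Rightarrow> (nat \<Rightarrow> real) \<Rightarrow> real" where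
  "Dual n k p h b \<epsilon> \<sigma> \<sigma>' =
     (\<Sum>j<p + k. (\<sigma>' j - \<sigma> j) * b j) - (\<Sum>j<p + k. (\<sigma>' j + \<sigma> j) * \<epsilon> j)
     - (\<Sum>i<n. ln (\<Sum>l<k. exp (a_theta n k p h (\<lambda>j. \<sigma>' j - \<sigma> j) i l)))"

definition Vval :: "nat \<Rightarrow> nat \<Rightarrow> nat \<Rightarrow> (nat \<Rightarrow> nat \<Rightarrow> nat option) \<Rightarrow> (nat \<Rightarrow> real) \<Rightarrow> (nat \<Rightarrow> real) \<Rightarrow> real" where
  "Vval n k p h b \<epsilon> =
     Sup {Dual n k p h b \<epsilon> \<sigma> \<sigma>' | \<sigma> \<sigma>'. (\<forall>j<p + k. 0 \<le> \<sigma> j) \<and> (\<forall>j<p + k. 0 \<le> \<sigma>' j)}"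

definition Fobj :: "nat \<Rightarrow> nat \<Rightarrow> nat \<Rightarrow> (nat \<Rightarrow> nat \<Rightarrow> nat option) \<Rightarrow> (nat \<Rightarrow> nat \<Rightarrow> real)
                     \<Rightarrow> (nat \<Rightarrow> real) \<Rightarrow> (nat \<Rightarrow> real) \<Rightarrow> (nat \<Rightarrow> real) \<Rightarrow> real" where
  "Fobj n k p h \<eta> b \<epsilon> \<theta> =
     - (\<Sum>i<n. \<Sum>l<k. \<eta> i l * ln (g_theta n k p h \<theta> i l))
     + (\<Sum>j<p + k. (bstar n k p h \<eta> j - (b j - \<epsilon> j)) * max (\<theta> j) 0)
     + (\<Sum>j<p + k. (b j + \<epsilon> j - bstar n k p h \<eta> j) * max (- \<theta> j) 0)"

definition AiT_theta :: "nat \<Rightarrow> nat \<Rightarrow> nat \<Rightarrow> (nat \<Rightarrow> nat \<Rightarrow> nat option) \<Rightarrow> nat \<Rightarrow> (nat \<Rightarrow> real) \<Rightarrow> nat \<Rightarrow> real" where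
  "AiT_theta n k p h i \<theta> l = (\<Sum>j<p + k. Amat n p h j i l * \<theta> j)"

text \<open>x-hat_i in R^{mk}: A_i flattened row-major, 0-based entry j*k + l is A_i(j,l)\<close>
definition xhat :: "nat \<Rightarrow> nat \<Rightarrow> nat \<Rightarrow> (nat \<Rightarrow> nat \<Rightarrow> nat option) \<Rightarrow> nat \<Rightarrow> nat \<Rightarrow> real" where
  "xhat n k p h i c = Amat n p h (c div k) i (c mod k)"

text \<open>T_theta = (theta_1 I_k, ..., theta_m I_k) in R^{k x mk}: entry (l, c) with 0-based c = j*k + l'\<close>
definition Tmat :: "nat \<Rightarrow> (nat \<Rightarrow> real) \<Rightarrow> nat \<Rightarrow> nat \<Rightarrow> real" where
  "Tmat k \<theta> l c = (if c mod k = l then \<theta> (c div k) else 0)"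

definition Tx :: "nat \<Rightarrow> nat \<Rightarrow> nat \<Rightarrow> (nat \<Rightarrow> nat \<Rightarrow> nat option) \<Rightarrow> (nat \<Rightarrow> real) \<Rightarrow> nat \<Rightarrow> nat \<Rightarrow> real" where
  "Tx n k p h \<theta> i l = (\<Sum>c<(p + k) * k. Tmat k \<theta> l c * xhat n k p h i c)"

end

theory Submission
  imports Defs
begin

text \<open>
  For every \<open>\<theta>\<close> the primal objective equals \<open>-D(\<theta>\<^sup>-, \<theta>\<^sup>+)\<close>: since each row of \<open>\<eta>\<close> sums to
  one, the cross entropy \<open>-\<eta> \<cdot> log g\<close> is the log-partition term minus \<open>\<eta> \<cdot> A\<^sup>T\<theta> = \<theta> \<cdot> b\<^sup>*\<close>.
  Conversely, \<open>D(\<sigma>, \<sigma>')\<close> depends on \<open>\<sigma>, \<sigma>' \<ge> 0\<close> only through \<open>\<sigma>' - \<sigma>\<close> apart from the penalty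
  \<open>(\<sigma>' + \<sigma>) \<cdot> \<epsilon>\<close>, which can only shrink when \<open>(\<sigma>, \<sigma>')\<close> is replaced by the negative and
  positive parts of \<open>\<sigma>' - \<sigma>\<close>. So the dual values and the negated primal values are
  mutually cofinal, giving both the value identity and the transfer of optimisers; the
  primal objective is nonnegative when \<open>b\<^sup>*\<close> lies in the box, so everything is finite.
\<close>

lemma sum_lessThan_mult_split:
  "(\<Sum>c<m * k. f c) = (\<Sum>j<m. \<Sum>l<k. f (j * k + l :: nat))"
proof -
  have "(\<Sum>c<m * k. f c) = (\<Sum>j<m. \<Sum>c\<in>{j * k..<j * k + k}. f c)"
    by (rule sum.nat_group[symmetric])
  also have "\<dots> = (\<Sum>j<m. \<Sum>l<k. f (j * k + l))"
  proof (rule sum.cong[OF refl])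
    fix j
    show "(\<Sum>c\<in>{j * k..<j * k + k}. f c) = (\<Sum>l<k. f (j * k + l))"
      using sum.shift_bounds_nat_ivl[of f 0 "j * k" k] by (simp add: atLeast0LessThan add.commute)
  qed
  finally show ?thesis .
qed

lemma sum_exp_pos: "1 \<le> (k::nat) \<Longrightarrow> 0 < (\<Sum>l<k. exp (v l :: real))"
  by (rule sum_pos) (auto simp: lessThan_empty_iff)

lemma ln_g_theta:
  assumes "1 \<le> k"
  shows "ln (g_theta n k p h \<theta> i l)
    = a_theta n k p h \<theta> i l - ln (\<Sum>l'<k. exp (a_theta n k p h \<theta> i l'))"
  using sum_exp_pos[OF assms, of "a_theta n k p h \<theta> i"] by (simp add: g_theta_def ln_div)

lemma g_theta_pos_le_1:
  assumes "l < k"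
  shows "0 < g_theta n k p h \<theta> i l \<and> g_theta n k p h \<theta> i l \<le> 1"
proof -
  have "exp (a_theta n k p h \<theta> i l) \<le> (\<Sum>l'<k. exp (a_theta n k p h \<theta> i l'))"
    using assms by (intro member_le_sum) auto
  then show ?thesis
    using sum_exp_pos[of k "a_theta n k p h \<theta> i"] assms
    by (simp add: g_theta_def divide_le_eq_1)
qed

lemma sum_eta_a_theta_eq_bstar:
  "(\<Sum>i<n. \<Sum>l<k. \<eta> i l * a_theta n k p h \<theta> i l) = (\<Sum>j<p + k. \<theta> j * bstar n k p h \<eta> j)"
  unfolding a_theta_def bstar_def
  by (simp add: sum_distrib_left sum_distrib_right mult_ac
      sum.swap[of _ "{..<p + k}"] sum.swap[of _ "{..<k}" "{..<n}"])

lemma cross_entropy_g_theta: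
  assumes eta_simplex: "\<forall>i<n. (\<forall>l<k. 0 \<le> \<eta> i l) \<and> (\<Sum>l<k. \<eta> i l) = 1"
    and "1 \<le> k"
  shows "(\<Sum>i<n. \<Sum>l<k. \<eta> i l * ln (g_theta n k p h \<theta> i l))
    = (\<Sum>j<p + k. \<theta> j * bstar n k p h \<eta> j)
      - (\<Sum>i<n. ln (\<Sum>l<k. exp (a_theta n k p h \<theta> i l)))"
proof -
  define L where "L i = ln (\<Sum>l<k. exp (a_theta n k p h \<theta> i l))" for i
  have "(\<Sum>i<n. \<Sum>l<k. \<eta> i l * ln (g_theta n k p h \<theta> i l))
      = (\<Sum>i<n. (\<Sum>l<k. \<eta> i l * a_theta n k p h \<theta> i l) - L i * (\<Sum>l<k. \<eta> i l))"
    by (simp add: ln_g_theta[OF assms(2)] L_def[symmetric] right_diff_distrib sum_subtractf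
        sum_distrib_left mult.commute)
  also have "\<dots> = (\<Sum>i<n. (\<Sum>l<k. \<eta> i l * a_theta n k p h \<theta> i l) - L i)"
    using eta_simplex by (intro sum.cong) auto
  finally show ?thesis
    by (simp add: sum_subtractf sum_eta_a_theta_eq_bstar L_def)
qed

lemma Fobj_eq_neg_Dual:
  assumes eta_simplex: "\<forall>i<n. (\<forall>l<k. 0 \<le> \<eta> i l) \<and> (\<Sum>l<k. \<eta> i l) = 1"
    and "1 \<le> k"
  shows "Fobj n k p h \<eta> b \<epsilon> \<theta> = - Dual n k p h b \<epsilon> (\<lambda>j. max (- \<theta> j) 0) (\<lambda>j. max (\<theta> j) 0)"
proof -
  have pos_neg: "(\<lambda>j. max (\<theta> j) 0 - max (- \<theta> j) 0) = \<theta>"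
    by (auto simp: max_def)
  have "(\<Sum>j<p + k. (bstar n k p h \<eta> j - (b j - \<epsilon> j)) * max (\<theta> j) 0)
      + (\<Sum>j<p + k. (b j + \<epsilon> j - bstar n k p h \<eta> j) * max (- \<theta> j) 0)
      = (\<Sum>j<p + k. \<theta> j * bstar n k p h \<eta> j)
        - (\<Sum>j<p + k. (max (\<theta> j) 0 - max (- \<theta> j) 0) * b j)
        + (\<Sum>j<p + k. (max (\<theta> j) 0 + max (- \<theta> j) 0) * \<epsilon> j)"
    by (simp add: sum.distrib[symmetric] sum_subtractf[symmetric])
       (intro sum.cong refl, simp add: max_def algebra_simps)
  then show ?thesis
    unfolding Fobj_def Dual_def cross_entropy_g_theta[OF assms] pos_neg by simp
qed

lemma Dual_le_Dual_pos_neg_parts: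
  assumes "\<forall>j<p + k. 0 \<le> \<sigma> j" "\<forall>j<p + k. 0 \<le> \<sigma>' j" "\<forall>j<p + k. 0 \<le> \<epsilon> j"
  shows "Dual n k p h b \<epsilon> \<sigma> \<sigma>'
    \<le> Dual n k p h b \<epsilon> (\<lambda>j. max (- (\<sigma>' j - \<sigma> j)) 0) (\<lambda>j. max (\<sigma>' j - \<sigma> j) 0)"
proof -
  have "(\<Sum>j<p + k. (max (\<sigma>' j - \<sigma> j) 0 + max (- (\<sigma>' j - \<sigma> j)) 0) * \<epsilon> j)
      \<le> (\<Sum>j<p + k. (\<sigma>' j + \<sigma> j) * \<epsilon> j)"
    using assms by (intro sum_mono mult_right_mono) (auto simp: max_def)
  moreover have "max (x - y) 0 - max (y - x) 0 = x - y" for x y :: real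
    by (auto simp: max_def)
  ultimately show ?thesis unfolding Dual_def by simp
qed

lemma Fobj_nonneg:
  assumes "\<forall>i<n. \<forall>l<k. 0 \<le> \<eta> i l"
    and "\<forall>j<p + k. b j - \<epsilon> j \<le> bstar n k p h \<eta> j"
    and "\<forall>j<p + k. bstar n k p h \<eta> j \<le> b j + \<epsilon> j"
  shows "0 \<le> Fobj n k p h \<eta> b \<epsilon> \<theta>"
proof -
  have "(\<Sum>i<n. \<Sum>l<k. \<eta> i l * ln (g_theta n k p h \<theta> i l)) \<le> 0"
    using assms(1) g_theta_pos_le_1 by (intro sum_nonpos mult_nonneg_nonpos) auto
  moreover have "0 \<le> (\<Sum>j<p + k. (bstar n k p h \<eta> j - (b j - \<epsilon> j)) * max (\<theta> j) 0)"
    using assms(2) by (intro sum_nonneg) auto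
  moreover have "0 \<le> (\<Sum>j<p + k. (b j + \<epsilon> j - bstar n k p h \<eta> j) * max (- \<theta> j) 0)"
    using assms(3) by (intro sum_nonneg) auto
  ultimately show ?thesis unfolding Fobj_def by linarith
qed

lemma Sup_eq_neg_Inf_if_cofinal:
  fixes S :: "real set" and F :: "'a \<Rightarrow> real"
  assumes "bdd_below (range F)"
    and "\<And>\<theta>. - F \<theta> \<in> S"
    and "\<And>x. x \<in> S \<Longrightarrow> \<exists>\<theta>. x \<le> - F \<theta>"
  shows "Sup S = - Inf (range F)"
proof -
  obtain m where m: "\<And>\<theta>. m \<le> F \<theta>"
    using assms(1) by (auto simp: bdd_below_def)
  have "bdd_above S"
    using assms(3) m by (intro bdd_aboveI[where M = "- m"]) (smt (verit))
  moreover have "bdd_above (uminus ` range F)"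
    using m by (intro bdd_aboveI[where M = "- m"]) auto
  ultimately have "Sup S = Sup (uminus ` range F)"
    using assms(2,3) by (intro antisym cSup_mono) auto
  then show ?thesis by (simp add: Inf_real_def)
qed

lemma AiT_theta_eq_Tx:
  assumes "l < k"
  shows "AiT_theta n k p h i \<theta> l = Tx n k p h \<theta> i l"
proof -
  have "Tx n k p h \<theta> i l
      = (\<Sum>j<p + k. \<Sum>l'<k. Tmat k \<theta> l (j * k + l') * xhat n k p h i (j * k + l'))"
    unfolding Tx_def by (rule sum_lessThan_mult_split)
  also have "\<dots> = (\<Sum>j<p + k. \<Sum>l'<k. if l' = l then \<theta> j * Amat n p h j i l' else 0)"
    using assms by (intro sum.cong refl) (simp add: Tmat_def xhat_def)
  also have "\<dots> = (\<Sum>j<p + k. \<theta> j * Amat n p h j i l)"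
    using assms by simp
  finally show ?thesis unfolding AiT_theta_def by (simp add: mult.commute)
qed

lemma g_theta_eq_softmax_Tx:
  assumes "l < k"
  shows "g_theta n k p h \<theta> i l = softmax k (Tx n k p h \<theta> i) l"
proof -
  have "a_theta n k p h \<theta> i l' = Tx n k p h \<theta> i l'" if "l' < k" for l'
    using AiT_theta_eq_Tx[OF that] by (simp add: AiT_theta_def a_theta_def mult.commute)
  with assms show ?thesis unfolding g_theta_def softmax_def by simp
qed

theorem lemma1:
  fixes n k p :: nat
    and h :: "nat \<Rightarrow> nat \<Rightarrow> nat option"
    and \<eta> :: "nat \<Rightarrow> nat \<Rightarrow> real"
    and b \<epsilon> :: "nat \<Rightarrow> real"
  assumes n_pos: "1 \<le> n" and k_ge: "2 \<le> k" and p_pos: "1 \<le> p"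
    and h_range: "\<forall>j<p. \<forall>i<n. \<forall>l. h j i = Some l \<longrightarrow> l < k"
    and nj_pos: "\<forall>j<p. 1 \<le> nj n h j"
    and eta_simplex: "\<forall>i<n. (\<forall>l<k. 0 \<le> \<eta> i l) \<and> (\<Sum>l<k. \<eta> i l) = 1"
    and eps_nonneg: "\<forall>j<p + k. 0 \<le> \<epsilon> j"
    and b_lower: "\<forall>j<p + k. b j - \<epsilon> j \<le> bstar n k p h \<eta> j"
    and b_upper: "\<forall>j<p + k. bstar n k p h \<eta> j \<le> b j + \<epsilon> j"
  shows "(\<forall>j<p + k. 0 \<le> bstar n k p h \<eta> j - (b j - \<epsilon> j) \<and> 0 \<le> b j + \<epsilon> j - bstar n k p h \<eta> j)
    \<and> - Vval n k p h b \<epsilon> = Inf (range (Fobj n k p h \<eta> b \<epsilon>))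
    \<and> (\<forall>\<sigma> \<sigma>'. (\<forall>j<p + k. 0 \<le> \<sigma> j) \<and> (\<forall>j<p + k. 0 \<le> \<sigma>' j)
          \<and> (\<forall>\<tau> \<tau>'. (\<forall>j<p + k. 0 \<le> \<tau> j) \<and> (\<forall>j<p + k. 0 \<le> \<tau>' j)
                 \<longrightarrow> Dual n k p h b \<epsilon> \<tau> \<tau>' \<le> Dual n k p h b \<epsilon> \<sigma> \<sigma>')
        \<longrightarrow> (\<forall>\<theta>. Fobj n k p h \<eta> b \<epsilon> (\<lambda>j. \<sigma>' j - \<sigma> j) \<le> Fobj n k p h \<eta> b \<epsilon> \<theta>))
    \<and> (\<forall>\<theta>. \<forall>i<n. (\<forall>l<k. AiT_theta n k p h i \<theta> l = Tx n k p h \<theta> i l)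
          \<and> (\<forall>l<k. g_theta n k p h \<theta> i l = softmax k (Tx n k p h \<theta> i) l))"
proof -
  let ?F = "Fobj n k p h \<eta> b \<epsilon>" and ?D = "Dual n k p h b \<epsilon>"
  have F_eq: "?F \<theta> = - ?D (\<lambda>j. max (- \<theta> j) 0) (\<lambda>j. max (\<theta> j) 0)" for \<theta>
    using Fobj_eq_neg_Dual[OF eta_simplex] k_ge by simp
  have D_le: "?D \<sigma> \<sigma>' \<le> - ?F (\<lambda>j. \<sigma>' j - \<sigma> j)"
    if "\<forall>j<p + k. 0 \<le> \<sigma> j" "\<forall>j<p + k. 0 \<le> \<sigma>' j" for \<sigma> \<sigma>'
    using Dual_le_Dual_pos_neg_parts[OF that eps_nonneg] F_eq by simp
  define S where
    "S = {?D \<sigma> \<sigma>' | \<sigma> \<sigma>'. (\<forall>j<p + k. 0 \<le> \<sigma> j) \<and> (\<forall>j<p + k. 0 \<le> \<sigma>' j)}"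
  have "bdd_below (range ?F)"
    using Fobj_nonneg eta_simplex b_lower b_upper by (intro bdd_belowI2[where m = 0]) auto
  moreover have "- ?F \<theta> \<in> S" for \<theta>
    unfolding S_def F_eq by fastforce
  moreover have "\<exists>\<theta>. x \<le> - ?F \<theta>" if "x \<in> S" for x
    using that D_le unfolding S_def by blast
  ultimately have dual_value: "- Vval n k p h b \<epsilon> = Inf (range ?F)"
    unfolding Vval_def S_def[symmetric] using Sup_eq_neg_Inf_if_cofinal[of ?F S] by simp
  have optimal: "?F (\<lambda>j. \<sigma>' j - \<sigma> j) \<le> ?F \<theta>"
    if "\<forall>j<p + k. 0 \<le> \<sigma> j" "\<forall>j<p + k. 0 \<le> \<sigma>' j"
      and "\<forall>\<tau> \<tau>'. (\<forall>j<p + k. 0 \<le> \<tau> j) \<and> (\<forall>j<p + k. 0 \<le> \<tau>' j) \<longrightarrow> ?D \<tau> \<tau>' \<le> ?D \<sigma> \<sigma>'"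
    for \<sigma> \<sigma>' \<theta>
  proof -
    have "?D (\<lambda>j. max (- \<theta> j) 0) (\<lambda>j. max (\<theta> j) 0) \<le> ?D \<sigma> \<sigma>'"
      using that(3) by (simp add: max_def)
    then show ?thesis using D_le[OF that(1,2)] F_eq[of \<theta>] by linarith
  qed
  show ?thesis
    using b_lower b_upper dual_value optimal AiT_theta_eq_Tx g_theta_eq_softmax_Tx by simp
qed

end
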